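(* For integers $0\le a<b$ let $\Delta_3([a,b))$ denote the number of evil integers in $[a,b)$ divisible by $3$ minus the number of odious integers in $[a,b)$ divisible by $3$ (both even and odd integers are counted). Then: 1) For every integer $n\ge 1$: $\Delta_3([0,2^n))=2\cdot 3^{\frac n2-1}$ if $n$ is even, and $\Delta_3([0,2^n))=3^{\frac{n-1}{2}}$ if $n$ is odd. 2) For integers $n,m$: $$\Delta_3([2^n,2^n+2^m))=\begin{cases}3^{\lfloor\frac{m-1}{2}\rfloor}, & n \text{ odd},\ 1\le m\le n-1,\\ 3^{\frac m2-1}, & n \text{ and } m \text{ even},\ 2\le m\le n-2,\\ 0, & n \text{ even},\ m \text{ odd},\ 1\le m\le n-1.\end{cases}$$ 3) For integers $n,m$: $$\Delta_3([2^n+2^{n-2},\,2^n+2^{n-2}+2^m))=\begin{cases}-3^{\lfloor\frac{m-1}{2}\rfloor}, & n \text{ even},\ 1\le m\le n-3,\\ -3^{\frac m2-1}, & n \text{ odd},\ m \text{ even},\ 2\le m\le n-3,\\ 0, & n \text{ and } m \text{ odd},\ 1\le m\le n-4.\end{cases}$$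
   Context: A nonnegative integer is called evil if its binary expansion contains an even number of 1's, and odious if it contains an odd number of 1's; in particular $0$ is evil. An interval $[a,b)$ means the set of integers $x$ with $a\le x<b$. *)

theory Defs
  imports Main
begin

fun ones :: "nat \<Rightarrow> nat" where
  "ones n = (if n = 0 then 0 else n mod 2 + ones (n div 2))"

definition evil :: "nat \<Rightarrow> bool" where
  "evil x \<longleftrightarrow> even (ones x)"

definition odious :: "nat \<Rightarrow> bool" where
  "odious x \<longleftrightarrow> odd (ones x)"

definition Delta3 :: "nat \<Rightarrow> nat \<Rightarrow> int" where
  "Delta3 a b = int (card {x \<in> {a..<b}. 3 dvd x \<and> evil x})
              - int (card {x \<in> {a..<b}. 3 dvd x \<and> odious x})"

end

theory Submission imports Defs begin

text \<open>
  Writing \<open>Delta3\<close> as a sum of Thue--Morse signs \<open>(-1)^ones x\<close> over multiples of 3, a dyadic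
  block \<open>[c 2^m, (c+1) 2^m)\<close> contributes \<open>(-1)^ones c\<close> times the signed count \<open>S m r\<close> of
  \<open>y < 2^m\<close> in a fixed residue class \<open>r\<close> modulo 3. Splitting \<open>y\<close> by its last binary digit gives
  the linear recurrence \<open>S (m+1) r = S m (2r) - S m (2r+1)\<close>, whose solution has period two in \<open>m\<close>
  up to a factor 3. The three intervals of the theorem are single blocks with \<open>c = 0\<close>,
  \<open>c = 2^(n-m)\<close> and \<open>c = 5 \<cdot> 2^(n-2-m)\<close>.
\<close>

declare ones.simps [simp del]

lemma ones_eq: "ones x = x mod 2 + ones (x div 2)"
  by (cases "x = 0") (simp_all add: ones.simps)

lemma ones_0 [simp]: "ones 0 = 0"
  by (simp add: ones.simps)

lemma ones_double_add: "b < 2 \<Longrightarrow> ones (2 * z + b) = b + ones z"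
  using ones_eq [of "2 * z + b"] by simp

lemma ones_double [simp]: "ones (2 * z) = ones z"
  using ones_double_add [of 0 z] by simp

lemma ones_double_Suc [simp]: "ones (Suc (2 * z)) = Suc (ones z)"
  using ones_double_add [of 1 z] by simp

lemma ones_mult_pow2_add: "y < 2 ^ m \<Longrightarrow> ones (c * 2 ^ m + y) = ones c + ones y"
proof (induction m arbitrary: y)
  case 0
  then show ?case by simp
next
  case (Suc m)
  have "y div 2 < 2 ^ m"
    using Suc.prems by simp
  then have IH: "ones (c * 2 ^ m + y div 2) = ones c + ones (y div 2)"
    by (rule Suc.IH)
  have "ones (c * 2 ^ Suc m + y) = ones (2 * (c * 2 ^ m + y div 2) + y mod 2)"
    by (rule arg_cong [where f = ones]) simp
  also have "\<dots> = y mod 2 + ones (c * 2 ^ m + y div 2)"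
    by (rule ones_double_add) simp
  finally have "ones (c * 2 ^ Suc m + y) = y mod 2 + ones (c * 2 ^ m + y div 2)" .
  then show ?case
    using IH ones_eq [of y] by simp
qed

lemma ones_mult_pow2: "ones (c * 2 ^ m) = ones c"
  using ones_mult_pow2_add [of 0 m c] by simp

lemma ones_pow2: "ones (2 ^ k) = 1"
  using ones_mult_pow2 [of 1 k] ones_eq [of 1] by simp

lemma ones_five_mult_pow2: "ones (5 * 2 ^ k) = 2"
proof -
  have "ones 5 = 2"
    using ones_eq [of 5] ones_eq [of 2] ones_eq [of 1] by simp
  then show ?thesis
    using ones_mult_pow2 [of 5 k] by simp
qed

lemma pow2_mod_3: "(2::nat) ^ n mod 3 = (if even n then 1 else 2)"
proof (induction n)
  case 0
  then show ?case by simp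
next
  case (Suc n)
  have "(2::nat) ^ Suc n mod 3 = 2 * (2 ^ n mod 3) mod 3"
    by (simp add: mod_mult_right_eq)
  with Suc show ?case by auto
qed

definition tm_residue_sum :: "nat \<Rightarrow> nat \<Rightarrow> int" where
  "tm_residue_sum m r = (\<Sum>y<2 ^ m. if y mod 3 = r mod 3 then (-1) ^ ones y else 0)"

lemma sum_lessThan_double:
  fixes g :: "nat \<Rightarrow> 'a::comm_monoid_add"
  shows "(\<Sum>y<2 * N. g y) = (\<Sum>z<N. g (2 * z) + g (2 * z + 1))"
  by (induction N) (simp_all add: sum.distrib algebra_simps)

text \<open>\<open>x \<mapsto> 2x + b\<close> is an involution modulo 3, because \<open>2(2x + b) + b = x + 3(x + b)\<close>.\<close>

lemma double_add_mod_3_eq_iff: "(2 * z + b) mod 3 = r mod 3 \<longleftrightarrow> z mod 3 = (2 * r + b) mod (3::nat)"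
proof -
  have involution: "(2 * (2 * x + b) + b) mod 3 = x mod 3" for x :: nat
  proof -
    have "2 * (2 * x + b) + b = x + 3 * (x + b)"
      by simp
    then show ?thesis
      by (simp only: mod_mult_self2)
  qed
  have cong: "(2 * x + b) mod 3 = (2 * y + b) mod 3" if "x mod 3 = y mod 3" for x y :: nat
    using that by (metis mod_add_left_eq mod_mult_right_eq)
  show ?thesis
    using involution cong by metis
qed

lemma tm_residue_sum_Suc:
  "tm_residue_sum (Suc m) r = tm_residue_sum m (2 * r) - tm_residue_sum m (2 * r + 1)"
proof -
  define t :: "nat \<Rightarrow> nat \<Rightarrow> int" where
    "t r y = (if y mod 3 = r mod 3 then (-1) ^ ones y else 0)" for r y
  have even_digit: "t r (2 * z) = t (2 * r) z" for z
    using double_add_mod_3_eq_iff [of z 0 r] by (simp add: t_def)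
  have odd_digit: "t r (Suc (2 * z)) = - t (Suc (2 * r)) z" for z
    using double_add_mod_3_eq_iff [of z 1 r] by (simp add: t_def)
  have "tm_residue_sum k r' = (\<Sum>y<2 ^ k. t r' y)" for k r'
    by (simp add: tm_residue_sum_def t_def)
  then show ?thesis
    by (simp add: sum_lessThan_double even_digit odd_digit sum_subtractf)
qed

lemma tm_residue_sum_cong:
  "r mod 3 = r' mod 3 \<Longrightarrow> tm_residue_sum m r = tm_residue_sum m r'"
  by (simp add: tm_residue_sum_def)

lemma tm_residue_sum_pow2:
  "tm_residue_sum m (2 ^ k) = tm_residue_sum m (if even k then 1 else 2)"
  by (rule tm_residue_sum_cong) (simp add: pow2_mod_3)

lemma tm_residue_sum_odd_even:
  "tm_residue_sum (2 * k + 1) 0 = 3 ^ k \<and> tm_residue_sum (2 * k + 1) 1 = - (3 ^ k)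
     \<and> tm_residue_sum (2 * k + 1) 2 = 0
   \<and> tm_residue_sum (2 * k + 2) 0 = 2 * 3 ^ k \<and> tm_residue_sum (2 * k + 2) 1 = - (3 ^ k)
     \<and> tm_residue_sum (2 * k + 2) 2 = - (3 ^ k)"
proof -
  have step: "tm_residue_sum (Suc m) 0 = tm_residue_sum m 0 - tm_residue_sum m 1"
    "tm_residue_sum (Suc m) 1 = tm_residue_sum m 2 - tm_residue_sum m 0"
    "tm_residue_sum (Suc m) 2 = tm_residue_sum m 1 - tm_residue_sum m 2" for m
    using tm_residue_sum_Suc [of m 1] tm_residue_sum_Suc [of m 2]
      tm_residue_sum_cong [of 3 0 m] tm_residue_sum_cong [of 4 1 m] tm_residue_sum_cong [of 5 2 m]
    by (simp_all add: tm_residue_sum_Suc [of m 0])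
  show ?thesis
  proof (induction k)
    case 0
    have "tm_residue_sum 0 0 = 1" "tm_residue_sum 0 1 = 0" "tm_residue_sum 0 2 = 0"
      by (simp_all add: tm_residue_sum_def)
    then show ?case
      using step [of 0] step [of 1] by (simp add: numeral_2_eq_2)
  next
    case (Suc k)
    then show ?case
      using step [of "2 * k + 2"] step [of "2 * k + 3"] by (simp add: eval_nat_numeral)
  qed
qed

lemma tm_residue_sum_closed_form:
  assumes "1 \<le> m"
  shows "tm_residue_sum m 0 = (if even m then 2 * 3 ^ (m div 2 - 1) else 3 ^ ((m - 1) div 2))"
    and "tm_residue_sum m 1 = - (3 ^ ((m - 1) div 2))"
    and "tm_residue_sum m 2 = (if even m then - (3 ^ (m div 2 - 1)) else 0)"
proof -
  have "\<exists>k. m = 2 * k + 1 \<or> m = 2 * k + 2"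
    using assms by presburger
  then obtain k where "m = 2 * k + 1 \<or> m = 2 * k + 2" ..
  with tm_residue_sum_odd_even [of k]
  show "tm_residue_sum m 0 = (if even m then 2 * 3 ^ (m div 2 - 1) else 3 ^ ((m - 1) div 2))"
    and "tm_residue_sum m 1 = - (3 ^ ((m - 1) div 2))"
    and "tm_residue_sum m 2 = (if even m then - (3 ^ (m div 2 - 1)) else 0)"
    by auto
qed

lemma Delta3_eq_sum: "Delta3 a b = (\<Sum>x\<in>{a..<b}. if 3 dvd x then (-1) ^ ones x else 0)"
proof -
  have "(\<Sum>x\<in>{a..<b}. if 3 dvd x then (-1) ^ ones x else 0)
      = (\<Sum>x\<in>{a..<b}. of_bool (3 dvd x \<and> evil x) - of_bool (3 dvd x \<and> odious x) :: int)"
    by (rule sum.cong) (auto simp: evil_def odious_def minus_one_power_iff)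
  then show ?thesis
    by (simp add: Delta3_def sum_subtractf Int_def conj_commute)
qed

lemma Delta3_dyadic_block:
  "Delta3 (c * 2 ^ m) (c * 2 ^ m + 2 ^ m) = (-1) ^ ones c * tm_residue_sum m (2 * (c * 2 ^ m))"
proof -
  let ?N = "c * 2 ^ m"
  have "Delta3 ?N (?N + 2 ^ m) = (\<Sum>y<2 ^ m. if 3 dvd (y + ?N) then (-1) ^ ones (y + ?N) else 0)"
    unfolding Delta3_eq_sum add.commute [of ?N]
    using sum.shift_bounds_nat_ivl [of "\<lambda>x. if 3 dvd x then (-1) ^ ones x else 0" 0 ?N "2 ^ m"]
    by (simp add: lessThan_atLeast0)
  also have "\<dots> = (\<Sum>y<2 ^ m. (-1) ^ ones c *
      (if y mod 3 = 2 * ?N mod 3 then (-1) ^ ones y else 0))"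
  proof (rule sum.cong [OF refl])
    fix y :: nat
    assume "y \<in> {..<2 ^ m}"
    then have "ones (y + ?N) = ones c + ones y"
      using ones_mult_pow2_add [of y m c] by (simp add: add.commute)
    moreover have "3 dvd (y + ?N) \<longleftrightarrow> y mod 3 = 2 * ?N mod 3"
      by presburger
    ultimately show "(if 3 dvd (y + ?N) then (-1) ^ ones (y + ?N) else 0) = (-1) ^ ones c *
        (if y mod 3 = 2 * ?N mod 3 then (-1) ^ ones y else (0::int))"
      by (simp add: power_add)
  qed
  also have "\<dots> = (-1) ^ ones c * tm_residue_sum m (2 * ?N)"
    by (simp add: tm_residue_sum_def sum_distrib_left)
  finally show ?thesis .
qed

lemma Delta3_pow2_interval:
  assumes "m \<le> n"
  shows "Delta3 (2 ^ n) (2 ^ n + 2 ^ m) = - tm_residue_sum m (if even n then 2 else 1)"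
proof -
  have "(2::nat) ^ n = 2 ^ (n - m) * 2 ^ m"
    using assms by (simp flip: power_add)
  then have "Delta3 (2 ^ n) (2 ^ n + 2 ^ m) = - tm_residue_sum m (2 ^ Suc n)"
    using Delta3_dyadic_block [of "2 ^ (n - m)" m] by (simp add: ones_pow2)
  then show ?thesis
    using tm_residue_sum_pow2 [of m "Suc n"] by simp
qed

lemma Delta3_five_pow2_interval:
  assumes "m + 2 \<le> n"
  shows "Delta3 (2 ^ n + 2 ^ (n - 2)) (2 ^ n + 2 ^ (n - 2) + 2 ^ m)
    = tm_residue_sum m (if even n then 1 else 2)"
proof -
  have "n - 2 + 2 = n"
    using assms by simp
  then have "(2::nat) ^ n = 2 ^ (n - 2) * 2 ^ 2"
    by (metis power_add)
  then have "(2::nat) ^ n + 2 ^ (n - 2) = 5 * 2 ^ (n - 2)"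
    by simp
  also have "\<dots> = (5 * 2 ^ (n - 2 - m)) * 2 ^ m"
    using assms by (simp flip: power_add)
  finally have start: "(2::nat) ^ n + 2 ^ (n - 2) = (5 * 2 ^ (n - 2 - m)) * 2 ^ m" .
  have "tm_residue_sum m (2 * (5 * 2 ^ (n - 2))) = tm_residue_sum m (2 ^ (n - 2))"
    by (rule tm_residue_sum_cong) presburger
  moreover have "even (n - 2) \<longleftrightarrow> even n"
    using assms by simp
  ultimately show ?thesis
    using Delta3_dyadic_block [of "5 * 2 ^ (n - 2 - m)" m] assms
    by (simp add: start ones_five_mult_pow2 tm_residue_sum_pow2 power_add [symmetric])
qed

theorem theorem3:
  shows "(\<forall>n::nat. n \<ge> 1 \<longrightarrow>
            Delta3 0 (2^n) = (if even n then 2 * 3 ^ (n div 2 - 1) else 3 ^ ((n - 1) div 2)))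
       \<and> (\<forall>n m :: nat.
            (odd n \<and> 1 \<le> m \<and> m \<le> n - 1 \<longrightarrow>
               Delta3 (2^n) (2^n + 2^m) = 3 ^ ((m - 1) div 2))
          \<and> (even n \<and> even m \<and> 2 \<le> m \<and> m \<le> n - 2 \<longrightarrow>
               Delta3 (2^n) (2^n + 2^m) = 3 ^ (m div 2 - 1))
          \<and> (even n \<and> odd m \<and> 1 \<le> m \<and> m \<le> n - 1 \<longrightarrow>
               Delta3 (2^n) (2^n + 2^m) = 0))
       \<and> (\<forall>n m :: nat.
            (even n \<and> 1 \<le> m \<and> m + 3 \<le> n \<longrightarrow>
               Delta3 (2^n + 2^(n-2)) (2^n + 2^(n-2) + 2^m) = - (3 ^ ((m - 1) div 2)))
          \<and> (odd n \<and> even m \<and> 2 \<le> m \<and> m + 3 \<le> n \<longrightarrow>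
               Delta3 (2^n + 2^(n-2)) (2^n + 2^(n-2) + 2^m) = - (3 ^ (m div 2 - 1)))
          \<and> (odd n \<and> odd m \<and> 1 \<le> m \<and> m + 4 \<le> n \<longrightarrow>
               Delta3 (2^n + 2^(n-2)) (2^n + 2^(n-2) + 2^m) = 0))"
proof (intro conjI allI impI)
  fix n :: nat
  assume "n \<ge> 1"
  then show "Delta3 0 (2^n) = (if even n then 2 * 3 ^ (n div 2 - 1) else 3 ^ ((n - 1) div 2))"
    using Delta3_dyadic_block [of 0 n] tm_residue_sum_closed_form(1) by simp
next
  fix n m :: nat
  assume "odd n \<and> 1 \<le> m \<and> m \<le> n - 1"
  moreover from this have "m \<le> n"
    by linarith
  ultimately show "Delta3 (2^n) (2^n + 2^m) = 3 ^ ((m - 1) div 2)"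
    using Delta3_pow2_interval [of m n] tm_residue_sum_closed_form(2) [of m] by simp
next
  fix n m :: nat
  assume "even n \<and> even m \<and> 2 \<le> m \<and> m \<le> n - 2"
  moreover from this have "m \<le> n"
    by linarith
  ultimately show "Delta3 (2^n) (2^n + 2^m) = 3 ^ (m div 2 - 1)"
    using Delta3_pow2_interval [of m n] tm_residue_sum_closed_form(3) [of m] by simp
next
  fix n m :: nat
  assume "even n \<and> odd m \<and> 1 \<le> m \<and> m \<le> n - 1"
  moreover from this have "m \<le> n"
    by linarith
  ultimately show "Delta3 (2^n) (2^n + 2^m) = 0"
    using Delta3_pow2_interval [of m n] tm_residue_sum_closed_form(3) [of m] by simp
next
  fix n m :: nat
  assume "even n \<and> 1 \<le> m \<and> m + 3 \<le> n"
  then show "Delta3 (2^n + 2^(n-2)) (2^n + 2^(n-2) + 2^m) = - (3 ^ ((m - 1) div 2))"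
    using Delta3_five_pow2_interval [of m n] tm_residue_sum_closed_form(2) [of m] by simp
next
  fix n m :: nat
  assume "odd n \<and> even m \<and> 2 \<le> m \<and> m + 3 \<le> n"
  then show "Delta3 (2^n + 2^(n-2)) (2^n + 2^(n-2) + 2^m) = - (3 ^ (m div 2 - 1))"
    using Delta3_five_pow2_interval [of m n] tm_residue_sum_closed_form(3) [of m] by simp
next
  fix n m :: nat
  assume "odd n \<and> odd m \<and> 1 \<le> m \<and> m + 4 \<le> n"
  then show "Delta3 (2^n + 2^(n-2)) (2^n + 2^(n-2) + 2^m) = 0"
    using Delta3_five_pow2_interval [of m n] tm_residue_sum_closed_form(3) [of m] by simp
qed

end
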